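(* Let $\alpha,\beta,\gamma,\lambda,x$ be non-negative integers with $(\alpha,\beta,\gamma,x)\neq(0,0,0,0)$. Then for every integer $n\ge0$, $$T_{n+1}^{\lambda,x}(\alpha,\beta,\gamma)=\gamma\,T_n^{\lambda,x}(\alpha,\beta,\gamma-\alpha)+x\lambda\beta\,T_n^{\lambda+1,x}(\alpha,\beta,\gamma+\beta-\alpha).$$
   Context: For complex numbers $c,\alpha$ and an integer $n\ge 0$ let $(c|\alpha)_n=\prod_{i=0}^{n-1}(c-i\alpha)$, with $(c|\alpha)_0=1$. Let $E_{\alpha,c}(t)=\sum_{n\ge 0}(c|\alpha)_n\,t^n/n!$, viewed as a formal power series in $t$. It equals $(1+\alpha t)^{c/\alpha}$ if $\alpha\neq0$ and $e^{ct}$ if $\alpha=0$. For complex $\alpha,\beta,\gamma,x$ and a non-negative integer $\lambda$, the numbers $T_n^{\lambda,x}(\alpha,\beta,\gamma)$, $n\ge0$, are defined by the formal power series identity $$\sum_{n\ge0}T_n^{\lambda,x}(\alpha,\beta,\gamma)\frac{t^n}{n!}=E_{\alpha,\gamma}(t)\,\bigl(1-x(E_{\alpha,\beta}(t)-1)\bigr)^{-\lambda}.$$ The third argument may be any complex number. *)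

theory Defs
  imports "HOL-Computational_Algebra.Formal_Power_Series"
begin

definition gen_fall :: "complex \<Rightarrow> complex \<Rightarrow> nat \<Rightarrow> complex" where
  "gen_fall c \<alpha> n = (\<Prod>i<n. c - of_nat i * \<alpha>)"

definition E_fps :: "complex \<Rightarrow> complex \<Rightarrow> complex fps" where
  "E_fps \<alpha> c = Abs_fps (\<lambda>n. gen_fall c \<alpha> n / fact n)"

text \<open>Generating function E_{alpha,gamma}(t) (1 - x(E_{alpha,beta}(t) - 1))^(-lambda).
  The inner series has constant term 1, so the fps inverse is the genuine inverse.\<close>
definition T_gf :: "nat \<Rightarrow> complex \<Rightarrow> complex \<Rightarrow> complex \<Rightarrow> complex \<Rightarrow> complex fps" where
  "T_gf lam x \<alpha> \<beta> \<gamma> =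
     E_fps \<alpha> \<gamma> * inverse (1 - fps_const x * (E_fps \<alpha> \<beta> - 1)) ^ lam"

definition T :: "nat \<Rightarrow> nat \<Rightarrow> complex \<Rightarrow> complex \<Rightarrow> complex \<Rightarrow> complex \<Rightarrow> complex" where
  "T n lam x \<alpha> \<beta> \<gamma> = fact n * fps_nth (T_gf lam x \<alpha> \<beta> \<gamma>) n"

end

theory Submission
  imports Defs
begin

text \<open>Since $E_{\alpha,c}'(t) = c\,E_{\alpha,c-\alpha}(t)$ and
  $E_{\alpha,p}E_{\alpha,q} = E_{\alpha,p+q}$, differentiating the generating function
  $E_{\alpha,\gamma}\,P^\lambda$ with $P = (1 - x(E_{\alpha,\beta}-1))^{-1}$ gives
  $\gamma E_{\alpha,\gamma-\alpha}P^\lambda + x\lambda\beta\,E_{\alpha,\gamma+\beta-\alpha}P^{\lambda+1}$,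
  because $P' = x\beta E_{\alpha,\beta-\alpha}P^2$. Comparing coefficients of $t^n/n!$ yields the
  recurrence. The addition law follows from uniqueness of the solution with constant term 1 of
  $(1+\alpha t)H' = cH$, which both sides satisfy.\<close>

unbundle fps_syntax

lemma gen_fall_Suc: "gen_fall c a (Suc n) = gen_fall c a n * (c - of_nat n * a)"
  unfolding gen_fall_def prod.lessThan_Suc by (simp only: mult.commute)

lemma gen_fall_Suc_shift: "gen_fall c a (Suc n) = c * gen_fall (c - a) a n"
  unfolding gen_fall_def prod.lessThan_Suc_shift by (simp add: algebra_simps)

lemma E_fps_nth: "E_fps a c $ n = gen_fall c a n / fact n"
  by (simp add: E_fps_def)

lemma E_fps_nth_0 [simp]: "E_fps a c $ 0 = 1"
  by (simp add: E_fps_nth gen_fall_def)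

lemma fps_deriv_E_fps: "fps_deriv (E_fps a c) = fps_const c * E_fps a (c - a)"
proof (rule fps_ext)
  fix n
  have "fact (Suc n) = (of_nat (Suc n) :: complex) * fact n" by simp
  then show "fps_deriv (E_fps a c) $ n = (fps_const c * E_fps a (c - a)) $ n"
    by (simp add: E_fps_nth gen_fall_Suc_shift field_simps del: of_nat_Suc fact_Suc)
qed

lemma E_fps_nth_Suc:
  "of_nat (Suc n) * E_fps a c $ Suc n = (c - of_nat n * a) * E_fps a c $ n"
proof -
  have "fact (Suc n) = (of_nat (Suc n) :: complex) * fact n" by simp
  then show ?thesis
    by (simp add: E_fps_nth gen_fall_Suc field_simps del: of_nat_Suc fact_Suc)
qed

lemma fps_nth_linear_ode:
  fixes H :: "'a::comm_ring_1 fps"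
  shows "((1 + fps_const a * fps_X) * fps_deriv H) $ n
           = of_nat (Suc n) * H $ Suc n + a * of_nat n * H $ n"
  by (cases n) (simp_all add: distrib_right mult.assoc)

lemma E_fps_ode: "(1 + fps_const a * fps_X) * fps_deriv (E_fps a c) = fps_const c * E_fps a c"
proof (rule fps_ext)
  fix n
  show "((1 + fps_const a * fps_X) * fps_deriv (E_fps a c)) $ n = (fps_const c * E_fps a c) $ n"
    unfolding fps_nth_linear_ode E_fps_nth_Suc by (simp add: algebra_simps)
qed

lemma E_fps_ode_unique:
  assumes ode: "(1 + fps_const a * fps_X) * fps_deriv H = fps_const c * H"
    and "H $ 0 = 1"
  shows "H = E_fps a c"
proof (rule fps_ext)
  fix n
  show "H $ n = E_fps a c $ n"
  proof (induction n)
    case 0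
    then show ?case using \<open>H $ 0 = 1\<close> by simp
  next
    case (Suc n)
    have "((1 + fps_const a * fps_X) * fps_deriv H) $ n = (fps_const c * H) $ n"
      using ode by simp
    then have "of_nat (Suc n) * H $ Suc n = (c - of_nat n * a) * H $ n"
      unfolding fps_nth_linear_ode by (simp add: algebra_simps)
    then have "of_nat (Suc n) * H $ Suc n = of_nat (Suc n) * E_fps a c $ Suc n"
      using E_fps_nth_Suc[of n a c] Suc.IH by simp
    then show ?case
      by (metis mult_cancel_left of_nat_eq_0_iff nat.distinct(1))
  qed
qed

lemma E_fps_mult: "E_fps a p * E_fps a q = E_fps a (p + q)"
proof (rule E_fps_ode_unique)
  let ?L = "1 + fps_const a * fps_X"
  have "?L * fps_deriv (E_fps a p * E_fps a q)
      = E_fps a p * (?L * fps_deriv (E_fps a q)) + (?L * fps_deriv (E_fps a p)) * E_fps a q"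
    unfolding fps_deriv_mult by (simp only: distrib_left mult_ac)
  also have "\<dots> = fps_const (p + q) * (E_fps a p * E_fps a q)"
    unfolding E_fps_ode fps_const_add[symmetric]
    by (simp only: distrib_left distrib_right mult_ac add_ac)
  finally show "?L * fps_deriv (E_fps a p * E_fps a q) = fps_const (p + q) * (E_fps a p * E_fps a q)" .
  show "(E_fps a p * E_fps a q) $ 0 = 1" by simp
qed

lemma fps_deriv_inverse_E_fps:
  "fps_deriv (inverse (1 - fps_const x * (E_fps a b - 1)))
     = fps_const (x * b) * E_fps a (b - a) * inverse (1 - fps_const x * (E_fps a b - 1)) ^ 2"
proof -
  let ?Q = "1 - fps_const x * (E_fps a b - 1)"
  have "fps_deriv ?Q = - (fps_const (x * b) * E_fps a (b - a))"
    by (simp add: fps_deriv_E_fps mult.assoc)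
  moreover have "fps_deriv (inverse ?Q) = - fps_deriv ?Q * inverse ?Q ^ 2"
    by (rule fps_inverse_deriv) simp
  ultimately show ?thesis by simp
qed

lemma fps_deriv_T_gf:
  "fps_deriv (T_gf lam x a b g) =
     fps_const g * T_gf lam x a b (g - a)
     + fps_const (x * of_nat lam * b) * T_gf (Suc lam) x a b (g + b - a)"
proof -
  define P where "P = inverse (1 - fps_const x * (E_fps a b - 1))"
  have T_gf_P: "T_gf l x a b c = E_fps a c * P ^ l" for l c
    by (simp add: T_gf_def P_def)
  have E_shift: "E_fps a g * E_fps a (b - a) = E_fps a (g + b - a)"
    by (simp add: E_fps_mult add_diff_eq)
  have "fps_const (of_nat lam) * fps_deriv P * P ^ (lam - 1)
          = fps_const (x * of_nat lam * b) * E_fps a (b - a) * P ^ Suc lam"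
  proof (cases lam)
    case (Suc m)
    then show ?thesis
      unfolding P_def fps_deriv_inverse_E_fps
      by (simp add: power_add[symmetric] mult_ac)
  qed simp
  then have "fps_deriv (E_fps a g * P ^ lam)
      = fps_const g * (E_fps a (g - a) * P ^ lam)
        + fps_const (x * of_nat lam * b) * ((E_fps a g * E_fps a (b - a)) * P ^ Suc lam)"
    by (simp add: fps_deriv_power fps_deriv_E_fps algebra_simps)
  then show ?thesis unfolding T_gf_P E_shift .
qed

lemma T_Suc:
  "T (Suc n) lam x a b g =
     g * T n lam x a b (g - a) + x * of_nat lam * b * T n (Suc lam) x a b (g + b - a)"
proof -
  have "T (Suc n) lam x a b g = fact n * fps_deriv (T_gf lam x a b g) $ n"
    unfolding T_def fps_deriv_nth fact_Suc by (simp add: mult_ac)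
  then show ?thesis
    unfolding fps_deriv_T_gf T_def by (simp add: algebra_simps)
qed

theorem theorem6:
  fixes \<alpha> \<beta> \<gamma> lam x n :: nat
  assumes "(\<alpha>, \<beta>, \<gamma>, x) \<noteq> (0, 0, 0, 0)"
  shows "T (n + 1) lam (of_nat x) (of_nat \<alpha>) (of_nat \<beta>) (of_nat \<gamma>) =
           of_nat \<gamma> * T n lam (of_nat x) (of_nat \<alpha>) (of_nat \<beta>) (of_nat \<gamma> - of_nat \<alpha>)
         + of_nat x * of_nat lam * of_nat \<beta> *
             T n (lam + 1) (of_nat x) (of_nat \<alpha>) (of_nat \<beta>) (of_nat \<gamma> + of_nat \<beta> - of_nat \<alpha>)"
  using T_Suc by simp

end
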